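(* Let $T$, $S$, $A$ be closed Hermitian subspaces in $X^2$ with $D(T)=D(S)=:D\subset D(A)$ and $T=S+A$. Suppose that $T(0)^\perp$ reduces both $S$ and $A$. Then $$T_sx=S_sx+A_sx\quad\text{for all }x\in D,$$ and, setting $\hat S_s:=S\cap(T(0)^\perp)^2$ and $\hat A_s:=A\cap(T(0)^\perp)^2$, one has $$\hat S_s=S_s,\qquad \hat A_s\subset A_s,$$ and $\hat A_s$ is a closed Hermitian operator in $T(0)^\perp$ with $D\subset D(\hat A_s)$.
   Context: $X$ is a complex Hilbert space and $X^2=X\times X$ carries the inner product $\langle (x,f),(y,g)\rangle=\langle x,y\rangle+\langle f,g\rangle$. A subspace $T$ in $X^2$ means a linear subspace of $X^2$ (a linear relation); a linear operator in $X$ is identified with its graph. Notation: $D(T)=\{x:(x,f)\in T \text{ for some } f\}$, $T(x)=\{f:(x,f)\in T\}$. The adjoint is $T^*=\{(y,g)\in X^2:\langle g,x\rangle=\langle y,f\rangle \text{ for all }(x,f)\in T\}$; $T$ is Hermitian if $T\subset T^*$. For subspaces $S,A$ in $X^2$, $S+A=\{(x,f+g):(x,f)\in S,(x,g)\in A\}$. For a closed subspace $T$, set $T_\infty=\{(0,g)\in X^2:(0,g)\in T\}$ and $T_s=T\ominus T_\infty$ (orthogonal complement of $T_\infty$ in $T$), so $T=T_s\oplus T_\infty$; $T_s$ is the graph of a linear operator (the operator part of $T$) with $D(T_s)=D(T)$ and $R(T_s)\subset T(0)^\perp$. Reducing subspace: if $X_1$ is a closed subspace of $X$ and $P$ the orthogonal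 projection of $X$ onto $X_1$, then $X_1$ reduces the subspace $T$ if $\{(Px,Pf):(x,f)\in T\}\subset T$. *)

theory Defs
  imports "HOL-Analysis.Analysis"
begin

text \<open>HOL-Analysis only has real inner product spaces, so we
introduce a class: a real Banach space with a compatible complex scalar multiplication
and a complex inner product (linear in the first, conjugate linear in the second argument)
inducing the norm.  The topology of the type is the norm topology.\<close>

class chilbert = real_normed_vector + complete_space +
  fixes scaleC :: "complex \<Rightarrow> 'a \<Rightarrow> 'a" (infixr \<open>*\<^sub>C\<close> 75)
    and cinner :: "'a \<Rightarrow> 'a \<Rightarrow> complex"
  assumes scaleC_add_right: "a *\<^sub>C (x + y) = a *\<^sub>C x + a *\<^sub>C y"
    and scaleC_add_left: "(a + b) *\<^sub>C x = a *\<^sub>C x + b *\<^sub>C x"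
    and scaleC_scaleC: "a *\<^sub>C (b *\<^sub>C x) = (a * b) *\<^sub>C x"
    and scaleC_one: "1 *\<^sub>C x = x"
    and scaleR_scaleC: "scaleR r x = complex_of_real r *\<^sub>C x"
    and cinner_commute: "cinner x y = cnj (cinner y x)"
    and cinner_add_left: "cinner (x + y) z = cinner x z + cinner y z"
    and cinner_scaleC_left: "cinner (a *\<^sub>C x) y = a * cinner x y"
    and cinner_norm: "cinner x x = complex_of_real ((norm x)\<^sup>2)"

definition lin_subspace :: "('a::chilbert \<times> 'a) set \<Rightarrow> bool" where
  "lin_subspace T \<longleftrightarrow> (0, 0) \<in> T \<and>
     (\<forall>x f y g. (x, f) \<in> T \<longrightarrow> (y, g) \<in> T \<longrightarrow> (x + y, f + g) \<in> T) \<and>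
     (\<forall>c x f. (x, f) \<in> T \<longrightarrow> (c *\<^sub>C x, c *\<^sub>C f) \<in> T)"

definition cinner2 :: "('a::chilbert \<times> 'a) \<Rightarrow> ('a \<times> 'a) \<Rightarrow> complex" where
  "cinner2 p q = cinner (fst p) (fst q) + cinner (snd p) (snd q)"

definition dom :: "('a::chilbert \<times> 'a) set \<Rightarrow> 'a set" where
  "dom T = {x. \<exists>f. (x, f) \<in> T}"

definition img :: "('a::chilbert \<times> 'a) set \<Rightarrow> 'a \<Rightarrow> 'a set" where
  "img T x = {f. (x, f) \<in> T}"

definition adjoint :: "('a::chilbert \<times> 'a) set \<Rightarrow> ('a \<times> 'a) set" where
  "adjoint T = {(y, g). \<forall>x f. (x, f) \<in> T \<longrightarrow> cinner g x = cinner y f}"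

definition hermitian :: "('a::chilbert \<times> 'a) set \<Rightarrow> bool" where
  "hermitian T \<longleftrightarrow> T \<subseteq> adjoint T"

definition rel_plus :: "('a::chilbert \<times> 'a) set \<Rightarrow> ('a \<times> 'a) set \<Rightarrow> ('a \<times> 'a) set" where
  "rel_plus S A = {(x, f + g) | x f g. (x, f) \<in> S \<and> (x, g) \<in> A}"

definition orth :: "'a::chilbert set \<Rightarrow> 'a set" where
  "orth M = {y. \<forall>x\<in>M. cinner x y = 0}"

definition orth_in :: "('a::chilbert \<times> 'a) set \<Rightarrow> ('a \<times> 'a) set \<Rightarrow> ('a \<times> 'a) set" where
  "orth_in T N = {p \<in> T. \<forall>q\<in>N. cinner2 p q = 0}"

definition T_inf :: "('a::chilbert \<times> 'a) set \<Rightarrow> ('a \<times> 'a) set" where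
  "T_inf T = {(0, g) | g. (0, g) \<in> T}"

definition T_s :: "('a::chilbert \<times> 'a) set \<Rightarrow> ('a \<times> 'a) set" where
  "T_s T = orth_in T (T_inf T)"

definition orth_proj :: "'a::chilbert set \<Rightarrow> 'a \<Rightarrow> 'a" where
  "orth_proj M x = (THE y. y \<in> M \<and> (\<forall>z\<in>M. cinner (x - y) z = 0))"

definition closed_csubspace :: "'a::chilbert set \<Rightarrow> bool" where
  "closed_csubspace M \<longleftrightarrow> closed M \<and> 0 \<in> M \<and> (\<forall>x\<in>M. \<forall>y\<in>M. x + y \<in> M) \<and>
     (\<forall>c. \<forall>x\<in>M. c *\<^sub>C x \<in> M)"

definition reduces :: "'a::chilbert set \<Rightarrow> ('a \<times> 'a) set \<Rightarrow> bool" where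
  "reduces X1 T \<longleftrightarrow> closed_csubspace X1 \<and>
     (\<forall>x f. (x, f) \<in> T \<longrightarrow> (orth_proj X1 x, orth_proj X1 f) \<in> T)"

definition is_operator :: "('a::chilbert \<times> 'a) set \<Rightarrow> bool" where
  "is_operator T \<longleftrightarrow> (\<forall>x f g. (x, f) \<in> T \<longrightarrow> (x, g) \<in> T \<longrightarrow> f = g)"

end

theory Submission
  imports Defs
begin

text \<open>Let \<open>M = T(0)\<^sup>\<perp>\<close> and let \<open>P\<close> be the orthogonal projection onto \<open>M\<close>. Hermiticity of \<open>T\<close>
  gives \<open>D \<subseteq> M\<close>, and \<open>S(0), A(0) \<subseteq> T(0)\<close> because \<open>T = S + A\<close>. Since \<open>M\<close> reduces \<open>S\<close>, for
  \<open>x \<in> M\<close> and \<open>(x, f) \<in> S\<close> also \<open>(x, P f) \<in> S\<close>, so \<open>f - P f \<in> S(0)\<close>. If \<open>f \<perp> S(0)\<close>, as for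
  the operator part, this residual is orthogonal both to \<open>f\<close> and to \<open>P f\<close>, hence zero: \<open>S\<^sub>s\<close> maps
  \<open>D\<close> into \<open>M\<close>, which gives \<open>S \<inter> M\<^sup>2 = S\<^sub>s\<close>. The operator parts add because two values of \<open>T\<close>
  at \<open>x\<close> lying in \<open>M\<close> differ by an element of \<open>T(0) \<inter> M = {0}\<close>. The projection \<open>P\<close> itself exists
  by the Hilbert projection theorem: the parallelogram law makes minimizing sequences Cauchy.\<close>

lemma cinner_zero_left [simp]: "cinner (0::'a::chilbert) y = 0"
  using cinner_add_left[of "0::'a" 0 y] by simp

lemma cinner_zero_right [simp]: "cinner x (0::'a::chilbert) = 0"
  by (subst cinner_commute) simp

lemma scaleC_minus_one: "(-1) *\<^sub>C (x::'a::chilbert) = - x"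
  using scaleR_scaleC[of "-1" x] by simp

lemma cinner_minus_left: "cinner (- x::'a::chilbert) y = - cinner x y"
  using cinner_scaleC_left[of "-1" x y] by (simp add: scaleC_minus_one)

lemma cinner_diff_left: "cinner (x - z::'a::chilbert) y = cinner x y - cinner z y"
  using cinner_add_left[of x "-z" y] by (simp add: cinner_minus_left)

lemma cinner_add_right: "cinner x (y + z::'a::chilbert) = cinner x y + cinner x z"
  by (subst (1 2 3) cinner_commute) (simp add: cinner_add_left)

lemma cinner_diff_right: "cinner x (y - z::'a::chilbert) = cinner x y - cinner x z"
  by (subst (1 2 3) cinner_commute) (simp add: cinner_diff_left)

lemma cinner_scaleC_right: "cinner x (a *\<^sub>C y::'a::chilbert) = cnj a * cinner x y"
  by (subst (1 2) cinner_commute) (simp add: cinner_scaleC_left)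

lemma cinner_self_eq_zero: "cinner x x = 0 \<Longrightarrow> (x::'a::chilbert) = 0"
  using cinner_norm[of x] by simp

lemma power2_norm_eq_cinner: "(norm (x::'a::chilbert))\<^sup>2 = Re (cinner x x)"
  using cinner_norm[of x] by simp

lemma power2_norm_diff:
  "(norm (x - y::'a::chilbert))\<^sup>2 = (norm x)\<^sup>2 + (norm y)\<^sup>2 - 2 * Re (cinner x y)"
proof -
  have "cinner (x - y) (x - y) = cinner x x - cinner x y - cnj (cinner x y) + cinner y y"
    by (simp add: cinner_diff_left cinner_diff_right cinner_commute[of y x])
  then show ?thesis by (simp add: power2_norm_eq_cinner)
qed

lemma parallelogram_law:
  "(norm (x + y::'a::chilbert))\<^sup>2 + (norm (x - y))\<^sup>2 = 2 * (norm x)\<^sup>2 + 2 * (norm y)\<^sup>2"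
  using power2_norm_diff[of x y] power2_norm_diff[of x "-y"] cinner_diff_right[of x 0 y] by simp

lemma closed_csubspace_diff:
  "closed_csubspace M \<Longrightarrow> x \<in> M \<Longrightarrow> y \<in> M \<Longrightarrow> x - (y::'a::chilbert) \<in> M"
  unfolding closed_csubspace_def by (metis diff_conv_add_uminus scaleC_minus_one)

lemma near_minimizers_close:
  fixes M :: "'a::chilbert set"
  assumes M: "closed_csubspace M" and "m \<in> M" "m' \<in> M"
    and d: "\<forall>u\<in>M. d \<le> (norm (f - u))\<^sup>2"
  shows "(norm (m - m'))\<^sup>2 \<le> 2 * ((norm (f - m))\<^sup>2 - d) + 2 * ((norm (f - m'))\<^sup>2 - d)"
proof -
  define mid where "mid = (1/2) *\<^sub>R (m + m')"
  have "mid \<in> M"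
    using assms unfolding mid_def closed_csubspace_def by (simp add: scaleR_scaleC)
  then have "4 * d \<le> (norm (2 *\<^sub>R (f - mid)))\<^sup>2"
    using d by (simp add: power2_eq_square)
  also have "2 *\<^sub>R (f - mid) = (f - m) + (f - m')"
    unfolding mid_def by (simp add: algebra_simps scaleR_2)
  finally show ?thesis
    using parallelogram_law[of "f - m" "f - m'"] by (simp add: norm_minus_commute)
qed

lemma minimizing_sequence_Cauchy:
  fixes M :: "'a::chilbert set"
  assumes M: "closed_csubspace M" and d: "\<forall>u\<in>M. d \<le> (norm (f - u))\<^sup>2"
    and m: "\<And>n. m n \<in> M" "\<And>n. (norm (f - m n))\<^sup>2 < d + inverse (real (Suc n))"
  shows "Cauchy m"
proof (rule CauchyI)
  have close: "(norm (m i - m j))\<^sup>2 \<le> 2 * inverse (real (Suc i)) + 2 * inverse (real (Suc j))"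
    for i j
    using near_minimizers_close[OF M m(1) m(1) d, of i j] m(2)[of i] m(2)[of j]
    by (smt (verit))
  fix e :: real assume "0 < e"
  obtain N :: nat where N: "4 / e\<^sup>2 < real (Suc N)"
    using reals_Archimedean2 less_Suc_eq of_nat_less_iff by (metis less_trans)
  have "\<forall>i\<ge>N. \<forall>j\<ge>N. norm (m i - m j) < e"
  proof (intro allI impI)
    fix i j assume "N \<le> i" "N \<le> j"
    then have "inverse (real (Suc i)) \<le> inverse (real (Suc N))"
      and "inverse (real (Suc j)) \<le> inverse (real (Suc N))"
      by (simp_all add: le_imp_inverse_le)
    then have "2 * inverse (real (Suc i)) + 2 * inverse (real (Suc j)) \<le> 4 * inverse (real (Suc N))"
      by linarith
    also have "\<dots> < e\<^sup>2" using N \<open>0 < e\<close> by (simp add: field_simps)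
    finally show "norm (m i - m j) < e"
      using close[of i j] \<open>0 < e\<close> by (simp add: power2_less_imp_less)
  qed
  then show "\<exists>N. \<forall>i\<ge>N. \<forall>j\<ge>N. norm (m i - m j) < e" ..
qed

lemma closed_csubspace_nearest_point:
  fixes M :: "'a::chilbert set"
  assumes M: "closed_csubspace M"
  shows "\<exists>y\<in>M. \<forall>u\<in>M. norm (f - y) \<le> norm (f - u)"
proof -
  define d where "d = (INF u\<in>M. (norm (f - u))\<^sup>2)"
  have "0 \<in> M" and "closed M" using M unfolding closed_csubspace_def by auto
  have bdd: "bdd_below ((\<lambda>u. (norm (f - u))\<^sup>2) ` M)" by (rule bdd_belowI[of _ 0]) auto
  have d_le: "\<forall>u\<in>M. d \<le> (norm (f - u))\<^sup>2"
    unfolding d_def using bdd by (auto intro: cINF_lower)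
  have "\<exists>m\<in>M. (norm (f - m))\<^sup>2 < d + inverse (real (Suc n))" for n
    using cINF_less_iff[OF _ bdd, of "d + inverse (real (Suc n))"] \<open>0 \<in> M\<close>
    unfolding d_def by auto
  then obtain m where m: "\<And>n. m n \<in> M" "\<And>n. (norm (f - m n))\<^sup>2 < d + inverse (real (Suc n))"
    by metis
  then obtain y where y: "m \<longlonglongrightarrow> y"
    using minimizing_sequence_Cauchy[OF M d_le] Cauchy_convergent_iff convergent_def by blast
  have "y \<in> M" using \<open>closed M\<close> y m(1) closed_sequentially by blast
  have "(\<lambda>n. (norm (f - m n))\<^sup>2) \<longlonglongrightarrow> (norm (f - y))\<^sup>2"
    by (intro tendsto_intros y)
  moreover have "(\<lambda>n. d + inverse (real (Suc n))) \<longlonglongrightarrow> d"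
    using tendsto_add[OF tendsto_const LIMSEQ_inverse_real_of_nat, of d] by simp
  ultimately have "(norm (f - y))\<^sup>2 \<le> d"
    by (rule LIMSEQ_le) (use m(2) less_imp_le in blast)
  then have "\<forall>u\<in>M. norm (f - y) \<le> norm (f - u)"
    using d_le by (metis order_trans power2_le_imp_le norm_ge_zero)
  with \<open>y \<in> M\<close> show ?thesis ..
qed

text \<open>Perturbing a nearest point \<open>y\<close> to \<open>y + a z\<close> with \<open>a = \<langle>f - y, z\<rangle> / \<parallel>z\<parallel>\<^sup>2\<close> lowers the squared
  distance by \<open>|\<langle>f - y, z\<rangle>|\<^sup>2 / \<parallel>z\<parallel>\<^sup>2\<close>.\<close>

lemma nearest_point_orthogonal:
  fixes M :: "'a::chilbert set"
  assumes M: "closed_csubspace M" and "y \<in> M" and y: "\<forall>u\<in>M. norm (f - y) \<le> norm (f - u)"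
    and "z \<in> M"
  shows "cinner (f - y) z = 0"
proof (cases "z = 0")
  case False
  define w where "w = f - y"
  define c where "c = cinner w z"
  define r where "r = (norm z)\<^sup>2"
  define a where "a = c / complex_of_real r"
  have "r > 0" using False unfolding r_def by simp
  have norm_az: "(norm (a *\<^sub>C z))\<^sup>2 = (cmod c)\<^sup>2 / r"
  proof -
    have "cinner (a *\<^sub>C z) (a *\<^sub>C z) = a * cnj a * cinner z z"
      by (simp add: cinner_scaleC_left cinner_scaleC_right)
    also have "\<dots> = complex_of_real ((cmod a)\<^sup>2 * r)"
      by (simp only: complex_norm_square cinner_norm r_def of_real_mult)
    finally have "(norm (a *\<^sub>C z))\<^sup>2 = (cmod a)\<^sup>2 * r"
      by (simp only: power2_norm_eq_cinner Re_complex_of_real)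
    then show ?thesis
      using \<open>r > 0\<close> by (simp add: a_def norm_divide power_divide power2_eq_square)
  qed
  have cinner_w_az: "cinner w (a *\<^sub>C z) = complex_of_real ((cmod c)\<^sup>2 / r)"
    using complex_norm_square[of c]
    by (simp add: cinner_scaleC_right a_def c_def mult.commute)
  have "y + a *\<^sub>C z \<in> M" using M \<open>y \<in> M\<close> \<open>z \<in> M\<close> unfolding closed_csubspace_def by blast
  then have "(norm w)\<^sup>2 \<le> (norm (w - a *\<^sub>C z))\<^sup>2"
    using y unfolding w_def by (simp add: power_mono diff_diff_eq)
  also have "\<dots> = (norm w)\<^sup>2 - (cmod c)\<^sup>2 / r"
    by (simp add: power2_norm_diff norm_az cinner_w_az)
  finally show ?thesis
    using \<open>r > 0\<close> unfolding c_def w_def by (simp add: divide_le_0_iff)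
qed simp

lemma ex1_orth_proj:
  fixes M :: "'a::chilbert set"
  assumes M: "closed_csubspace M"
  shows "\<exists>!y. y \<in> M \<and> (\<forall>z\<in>M. cinner (f - y) z = 0)"
proof (rule ex_ex1I)
  obtain y where "y \<in> M" "\<forall>u\<in>M. norm (f - y) \<le> norm (f - u)"
    using closed_csubspace_nearest_point[OF M] by blast
  then show "\<exists>y. y \<in> M \<and> (\<forall>z\<in>M. cinner (f - y) z = 0)"
    using nearest_point_orthogonal[OF M] by blast
next
  fix y y' assume y: "y \<in> M \<and> (\<forall>z\<in>M. cinner (f - y) z = 0)"
    and y': "y' \<in> M \<and> (\<forall>z\<in>M. cinner (f - y') z = 0)"
  then have "y' - y \<in> M" using closed_csubspace_diff[OF M] by blast
  then have "cinner (f - y) (y' - y) - cinner (f - y') (y' - y) = 0" using y y' by simp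
  then have "cinner (y' - y) (y' - y) = 0" by (simp add: cinner_diff_left)
  then show "y = y'" using cinner_self_eq_zero by force
qed

lemma orth_proj_mem: "closed_csubspace M \<Longrightarrow> orth_proj M f \<in> M"
  unfolding orth_proj_def using theI'[OF ex1_orth_proj] by blast

lemma orth_proj_id: "closed_csubspace M \<Longrightarrow> x \<in> M \<Longrightarrow> orth_proj M x = x"
  unfolding orth_proj_def by (rule the1_equality[OF ex1_orth_proj]) auto

lemma orth_diff: "y \<in> orth N \<Longrightarrow> z \<in> orth N \<Longrightarrow> y - z \<in> orth N"
  unfolding orth_def by (simp add: cinner_diff_right)

lemma orth_add: "y \<in> orth N \<Longrightarrow> z \<in> orth N \<Longrightarrow> y + z \<in> orth N"
  unfolding orth_def by (simp add: cinner_add_right)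

lemma orth_antimono: "N \<subseteq> N' \<Longrightarrow> orth N' \<subseteq> orth N"
  unfolding orth_def by blast

lemma mem_orth_self: "x \<in> N \<Longrightarrow> x \<in> orth N \<Longrightarrow> x = 0"
  unfolding orth_def using cinner_self_eq_zero by blast

lemma lin_subspace_diff:
  "lin_subspace T \<Longrightarrow> (x, f) \<in> T \<Longrightarrow> (y, g) \<in> T \<Longrightarrow> (x - y, f - g) \<in> T"
  unfolding lin_subspace_def by (metis diff_conv_add_uminus scaleC_minus_one)

lemma img_zero_diff:
  "lin_subspace T \<Longrightarrow> (x, f) \<in> T \<Longrightarrow> (x, g) \<in> T \<Longrightarrow> f - g \<in> img T 0"
  unfolding img_def using lin_subspace_diff by fastforce

lemma mem_T_s_iff: "(x, f) \<in> T_s T \<longleftrightarrow> (x, f) \<in> T \<and> f \<in> orth (img T 0)"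
proof -
  have "(\<forall>g. (0, g) \<in> T \<longrightarrow> cinner f g = 0) \<longleftrightarrow> (\<forall>g. (0, g) \<in> T \<longrightarrow> cinner g f = 0)"
    by (metis cinner_commute complex_cnj_zero)
  then show ?thesis
    unfolding T_s_def orth_in_def T_inf_def orth_def img_def cinner2_def by auto
qed

lemma hermitian_dom_subset_orth_img_zero:
  assumes "hermitian T"
  shows "dom T \<subseteq> orth (img T 0)"
proof
  fix x assume "x \<in> dom T"
  then obtain f where "(x, f) \<in> T" unfolding dom_def by blast
  moreover have "(0, g) \<in> adjoint T" if "g \<in> img T 0" for g
    using that assms unfolding img_def hermitian_def by blast
  ultimately show "x \<in> orth (img T 0)" unfolding adjoint_def orth_def by auto
qed

lemma img_zero_rel_plus_left:
  assumes "lin_subspace A"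
  shows "img S 0 \<subseteq> img (rel_plus S A) 0"
proof
  fix f assume "f \<in> img S 0"
  moreover have "(0, 0) \<in> A" using assms unfolding lin_subspace_def by blast
  ultimately have "(0, f + 0) \<in> rel_plus S A" unfolding img_def rel_plus_def by blast
  then show "f \<in> img (rel_plus S A) 0" unfolding img_def by simp
qed

lemma img_zero_rel_plus_right:
  assumes "lin_subspace S"
  shows "img A 0 \<subseteq> img (rel_plus S A) 0"
proof
  fix g assume "g \<in> img A 0"
  moreover have "(0, 0) \<in> S" using assms unfolding lin_subspace_def by blast
  ultimately have "(0, 0 + g) \<in> rel_plus S A" unfolding img_def rel_plus_def by blast
  then show "g \<in> img (rel_plus S A) 0" unfolding img_def by simp
qed

lemma Int_orth_subset_T_s:
  "img U 0 \<subseteq> N \<Longrightarrow> U \<inter> (orth N \<times> orth N) \<subseteq> T_s U"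
  using orth_antimono[of "img U 0" N] by (auto simp: mem_T_s_iff)

lemma reduces_closed_csubspace: "reduces M U \<Longrightarrow> closed_csubspace M"
  unfolding reduces_def by blast

lemma reduces_proj_mem:
  assumes "reduces M U" "(x, f) \<in> U" "x \<in> M"
  shows "(x, orth_proj M f) \<in> U"
  using assms orth_proj_id[OF reduces_closed_csubspace[OF assms(1)] assms(3)]
  unfolding reduces_def by force

lemma reduces_dom_Int:
  assumes "reduces M U"
  shows "M \<inter> dom U \<subseteq> dom (U \<inter> (M \<times> M))"
  using reduces_proj_mem[OF assms] orth_proj_mem[OF reduces_closed_csubspace[OF assms]]
  unfolding dom_def by blast

lemma T_s_maps_into_reducing:
  assumes red: "reduces (orth N) U" and U: "lin_subspace U" and "img U 0 \<subseteq> N"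
    and xf: "(x, f) \<in> T_s U" and "x \<in> orth N"
  shows "f \<in> orth N"
proof -
  let ?p = "orth_proj (orth N) f"
  have "(x, f) \<in> U" and f: "f \<in> orth (img U 0)" using xf by (auto simp: mem_T_s_iff)
  then have h: "f - ?p \<in> img U 0"
    using img_zero_diff[OF U] reduces_proj_mem[OF red _ \<open>x \<in> orth N\<close>] by blast
  have p: "?p \<in> orth N" using orth_proj_mem[OF reduces_closed_csubspace[OF red]] .
  have "cinner (f - ?p) f = 0" using f h unfolding orth_def by blast
  moreover have "cinner (f - ?p) ?p = 0" using p h \<open>img U 0 \<subseteq> N\<close> unfolding orth_def by blast
  ultimately have "cinner (f - ?p) (f - ?p) = 0" by (simp add: cinner_diff_right)
  then show ?thesis using p cinner_self_eq_zero by force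
qed

lemma T_s_eq_Int_reducing:
  assumes "reduces (orth N) U" "lin_subspace U" "img U 0 \<subseteq> N" "dom U \<subseteq> orth N"
  shows "U \<inter> (orth N \<times> orth N) = T_s U"
proof
  show "T_s U \<subseteq> U \<inter> (orth N \<times> orth N)"
  proof (clarify)
    fix x f assume xf: "(x, f) \<in> T_s U"
    then have "x \<in> orth N" using assms(4) unfolding dom_def by (auto simp: mem_T_s_iff)
    then show "(x, f) \<in> U \<inter> (orth N \<times> orth N)"
      using T_s_maps_into_reducing[OF assms(1-3) xf] xf by (simp add: mem_T_s_iff)
  qed
qed (rule Int_orth_subset_T_s[OF assms(3)])

lemma is_operator_Int_orth:
  assumes "lin_subspace U" "img U 0 \<subseteq> N"
  shows "is_operator (U \<inter> (orth N \<times> orth N))"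
  unfolding is_operator_def
proof (intro allI impI)
  fix x f g assume f: "(x, f) \<in> U \<inter> (orth N \<times> orth N)" and g: "(x, g) \<in> U \<inter> (orth N \<times> orth N)"
  then have "f - g \<in> N" using img_zero_diff[OF assms(1)] assms(2) by blast
  moreover have "f - g \<in> orth N" using f g orth_diff by blast
  ultimately show "f = g" using mem_orth_self by force
qed

lemma lin_subspace_Int_csubspace:
  "lin_subspace U \<Longrightarrow> closed_csubspace M \<Longrightarrow> lin_subspace (U \<inter> (M \<times> M))"
  unfolding lin_subspace_def closed_csubspace_def by auto

lemma hermitian_subset: "hermitian U \<Longrightarrow> V \<subseteq> U \<Longrightarrow> hermitian V"
  unfolding hermitian_def adjoint_def by blast

lemma T_s_rel_plus_decompose:
  assumes S: "lin_subspace S" and A: "lin_subspace A"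
    and T: "T = rel_plus S A" and M: "M = orth (img T 0)"
    and rS: "reduces M S" and rA: "reduces M A"
    and xk: "(x, k) \<in> T_s T" and "x \<in> M"
  shows "\<exists>g h. (x, g) \<in> T_s S \<and> (x, h) \<in> T_s A \<and> k = g + h"
proof -
  have "(x, k) \<in> T" and "k \<in> M" using xk by (auto simp: mem_T_s_iff M)
  then obtain f g where f: "(x, f) \<in> S" and g: "(x, g) \<in> A" and k: "k = f + g"
    unfolding T rel_plus_def by blast
  let ?Pf = "orth_proj M f" and ?Pg = "orth_proj M g"
  have Pf: "(x, ?Pf) \<in> S" "?Pf \<in> M" and Pg: "(x, ?Pg) \<in> A" "?Pg \<in> M"
    using reduces_proj_mem[OF rS f \<open>x \<in> M\<close>] reduces_proj_mem[OF rA g \<open>x \<in> M\<close>]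
      orth_proj_mem[OF reduces_closed_csubspace[OF rS]] by auto
  have "(0, (f - ?Pf) + (g - ?Pg)) \<in> T"
    using img_zero_diff[OF S f Pf(1)] img_zero_diff[OF A g Pg(1)]
    unfolding T rel_plus_def img_def by blast
  then have "k - (?Pf + ?Pg) \<in> img T 0" unfolding k img_def by (simp add: algebra_simps)
  moreover have "k - (?Pf + ?Pg) \<in> M" using \<open>k \<in> M\<close> Pf(2) Pg(2) M by (simp add: orth_add orth_diff)
  ultimately have "k = ?Pf + ?Pg" using M mem_orth_self by force
  moreover have "img S 0 \<subseteq> img T 0" and "img A 0 \<subseteq> img T 0"
    using img_zero_rel_plus_left[OF A] img_zero_rel_plus_right[OF S] T by auto
  then have "(x, ?Pf) \<in> T_s S" "(x, ?Pg) \<in> T_s A"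
    using Pf Pg Int_orth_subset_T_s \<open>x \<in> M\<close> unfolding M by blast+
  ultimately show ?thesis by blast
qed

lemma T_s_rel_plus_add:
  assumes S: "lin_subspace S" and A: "lin_subspace A"
    and T: "T = rel_plus S A" and M: "M = orth (img T 0)"
    and rS: "reduces M S" and rA: "reduces M A"
    and g: "(x, g) \<in> T_s S" and h: "(x, h) \<in> T_s A" and "x \<in> M"
  shows "(x, g + h) \<in> T_s T"
proof -
  have "img S 0 \<subseteq> img T 0" and "img A 0 \<subseteq> img T 0"
    using img_zero_rel_plus_left[OF A] img_zero_rel_plus_right[OF S] T by auto
  then have "g \<in> M" "h \<in> M"
    using T_s_maps_into_reducing[OF _ S _ g] T_s_maps_into_reducing[OF _ A _ h] rS rA \<open>x \<in> M\<close>
    unfolding M by auto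
  moreover have "(x, g + h) \<in> T" using g h unfolding T rel_plus_def by (auto simp: mem_T_s_iff)
  ultimately show ?thesis using M orth_add mem_T_s_iff by blast
qed

lemma img_T_s_rel_plus:
  assumes "lin_subspace S" "lin_subspace A" "T = rel_plus S A" "M = orth (img T 0)"
    "reduces M S" "reduces M A" "x \<in> M"
  shows "img (T_s T) x = {g + h | g h. g \<in> img (T_s S) x \<and> h \<in> img (T_s A) x}"
  using T_s_rel_plus_decompose[OF assms(1-6) _ assms(7)] T_s_rel_plus_add[OF assms(1-6) _ _ assms(7)]
  unfolding img_def by blast

theorem theorem3p3:
  fixes T S A :: "('a::chilbert \<times> 'a) set" and D :: "'a set"
  assumes "lin_subspace T" "closed T" "hermitian T"
    and "lin_subspace S" "closed S" "hermitian S"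
    and "lin_subspace A" "closed A" "hermitian A"
    and "dom T = D" "dom S = D" "D \<subseteq> dom A"
    and "T = rel_plus S A"
    and "reduces (orth (img T 0)) S" "reduces (orth (img T 0)) A"
  shows "(\<forall>x\<in>D. img (T_s T) x = {g + h | g h. g \<in> img (T_s S) x \<and> h \<in> img (T_s A) x})
    \<and> S \<inter> (orth (img T 0) \<times> orth (img T 0)) = T_s S
    \<and> A \<inter> (orth (img T 0) \<times> orth (img T 0)) \<subseteq> T_s A
    \<and> (let M = orth (img T 0); Ah = A \<inter> (M \<times> M) in
         lin_subspace Ah \<and> closed Ah \<and> hermitian Ah \<and> is_operator Ah \<and> Ah \<subseteq> M \<times> M
         \<and> D \<subseteq> dom Ah)"
proof -
  define M where "M = orth (img T 0)"
  have cs: "closed_csubspace M" using assms(14) reduces_closed_csubspace unfolding M_def by blast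
  have DM: "D \<subseteq> M" using hermitian_dom_subset_orth_img_zero[OF assms(3)] assms(10) M_def by blast
  have S0: "img S 0 \<subseteq> img T 0" and A0: "img A 0 \<subseteq> img T 0"
    using img_zero_rel_plus_left[OF assms(7)] img_zero_rel_plus_right[OF assms(4)] assms(13) by auto
  have "\<forall>x\<in>D. img (T_s T) x = {g + h | g h. g \<in> img (T_s S) x \<and> h \<in> img (T_s A) x}"
    using img_T_s_rel_plus[OF assms(4,7,13) M_def] assms(14,15) DM unfolding M_def by blast
  moreover have "S \<inter> (M \<times> M) = T_s S"
    using T_s_eq_Int_reducing[OF assms(14,4) S0] DM assms(11) unfolding M_def by blast
  moreover have "A \<inter> (M \<times> M) \<subseteq> T_s A" using Int_orth_subset_T_s[OF A0] unfolding M_def .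
  moreover have "closed (A \<inter> (M \<times> M))"
    using assms(8) cs unfolding closed_csubspace_def by (intro closed_Int closed_Times) auto
  moreover have "D \<subseteq> dom (A \<inter> (M \<times> M))"
    using reduces_dom_Int[OF assms(15)] DM assms(12) unfolding M_def by blast
  ultimately show ?thesis
    using lin_subspace_Int_csubspace[OF assms(7) cs] hermitian_subset[OF assms(9)]
      is_operator_Int_orth[OF assms(7) A0]
    unfolding M_def Let_def by auto
qed

end
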